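(* Let $d\ge 3$ and let $\mathcal M$ be a model of $\mathrm{PQM}_d$ with domain $\mathbb M$. Then there exists a function $\kappa:\mathbb M\to\mathbb H_d$ such that for all $m\in\mathbb M$ and all $p\in\mathbb H_d$, $$p\in F^{\mathcal M}(m)\iff \kappa(m)\le p,$$ equivalently $[m:p]^{\mathcal M}\iff[\kappa(m):p]^{\mathcal H_d}$. (That is, each $F^{\mathcal M}(m)$ has a least element $\kappa(m)$ and is the principal up-set it generates.)
   Context: Notation. For $d\ge 1$, $\mathbb H_d$ is the set of complex linear subspaces of $\mathbb C^d$, ordered by inclusion $\le$, with $\top=\mathbb C^d$, $\bot=\{0\}$, $p^\bot$ the orthogonal complement, $p\wedge q=p\cap q$ and $p\vee q=p+q$. $\mathbb U_d$ is the set of unitary operators on $\mathbb C^d$, and for $U\in\mathbb U_d$, $p\in\mathbb H_d$, $U(p)=\{Uv: v\in p\}$. The Sasaki projection is $p\,\&\,q := q\cap(q^\bot+p)$. Subspaces $p,q$ are compatible iff $p=(p\wedge q)\vee(p\wedge q^\bot)$. Language $\mathcal L_d$: a first-order language without equality and without constants, having a unary function symbol $u_U$ for each $U\in\mathbb U_d$, a unary function symbol $\pi_q$ for each $q\in\mathbb H_d$, and a unary relation symbol $[\,\cdot:p]$ for each $p\in\mathbb H_d$. Theory $\mathrm{PQM}_d$ (over $\mathcal L_d$) has the following axioms, for all $p,q\in\mathbb H_d$ and $U\in\mathbb U_d$: ($\neg\bot$) $\exists x\,\neg[x:\bot]$; ($\top$) $\forall x\,[x:\top]$; ($\le$) if $p\le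 q$: $\forall x\,([x:p]\to[x:q])$; ($\wedge$) if $p,q$ are compatible: $\forall x\,([x:p]\wedge[x:q]\to[x:p\wedge q])$; ($\pi_i$) $\forall x\,([x:p]\to[\pi_q(x):p\,\&\,q])$; ($\pi_c$) if $p\le q$: $\forall x\,([\pi_p(\pi_q(x)):\bot]\to[\pi_p(x):\bot])$; ($\pi_\bot$) $\forall x\,([\pi_q(x):\bot]\to[x:q^\bot])$; ($u_i$) $\forall x\,([x:p]\to[u_U(x):U(p)])$; ($u_e$) $\forall x\,([u_U(x):p]\to[x:U^{-1}(p)])$. Hilbert model $\mathcal H_d$: the $\mathcal L_d$-structure with domain $\mathbb H_d$, $u_U^{\mathcal H_d}(x)=U(x)$, $\pi_q^{\mathcal H_d}(x)=x\,\&\,q$, and $[x:p]^{\mathcal H_d}$ holds iff $x\le p$. Filter: for an $\mathcal L_d$-structure $\mathcal M$ with domain $\mathbb M$ and $m\in\mathbb M$, $F^{\mathcal M}(m)=\{p\in\mathbb H_d : [m:p]^{\mathcal M}\}$, where $[\,\cdot:p]^{\mathcal M}$ is the interpretation of the relation symbol $[\,\cdot:p]$ in $\mathcal M$. *)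

theory Defs
  imports "HOL-Analysis.Analysis"
begin

text \<open>The Hilbert space C^d is modelled as complex ^ 'n with d = CARD('n).\<close>

definition csubspace :: "(complex ^ 'n) set \<Rightarrow> bool" where
  "csubspace S \<longleftrightarrow> 0 \<in> S \<and> (\<forall>x\<in>S. \<forall>y\<in>S. x + y \<in> S) \<and> (\<forall>c. \<forall>x\<in>S. c *s x \<in> S)"

definition cinner :: "complex ^ 'n \<Rightarrow> complex ^ 'n \<Rightarrow> complex" where
  "cinner v w = (\<Sum>i\<in>UNIV. cnj (v $ i) * w $ i)"

definition orth :: "(complex ^ 'n) set \<Rightarrow> (complex ^ 'n) set" where
  "orth p = {v. \<forall>w\<in>p. cinner w v = 0}"

definition ssum :: "(complex ^ 'n) set \<Rightarrow> (complex ^ 'n) set \<Rightarrow> (complex ^ 'n) set" where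
  "ssum p q = {x + y | x y. x \<in> p \<and> y \<in> q}"

definition bot_sub :: "(complex ^ 'n) set" where
  "bot_sub = {0}"

definition sasaki :: "(complex ^ 'n) set \<Rightarrow> (complex ^ 'n) set \<Rightarrow> (complex ^ 'n) set" where
  "sasaki p q = q \<inter> ssum (orth q) p"

definition compatible :: "(complex ^ 'n) set \<Rightarrow> (complex ^ 'n) set \<Rightarrow> bool" where
  "compatible p q \<longleftrightarrow> p = ssum (p \<inter> q) (p \<inter> orth q)"

definition cadjoint :: "complex ^ 'n ^ 'n \<Rightarrow> complex ^ 'n ^ 'n" where
  "cadjoint U = (\<chi> i j. cnj (U $ j $ i))"

definition unitary :: "complex ^ 'n ^ 'n \<Rightarrow> bool" where
  "unitary U \<longleftrightarrow> cadjoint U ** U = mat 1 \<and> U ** cadjoint U = mat 1"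

definition uimage :: "complex ^ 'n ^ 'n \<Rightarrow> (complex ^ 'n) set \<Rightarrow> (complex ^ 'n) set" where
  "uimage U p = (\<lambda>v. U *v v) ` p"

definition upreimage :: "complex ^ 'n ^ 'n \<Rightarrow> (complex ^ 'n) set \<Rightarrow> (complex ^ 'n) set" where
  "upreimage U p = {v. U *v v \<in> p}"

text \<open>An L_d-structure with domain M: interpretations u (of the u_U), proj (of the pi_q)
  and R (with R p x meaning [x:p]).  Being a model of PQM_d:\<close>
definition PQM_model ::
  "'m set \<Rightarrow> (complex ^ 'n ^ 'n \<Rightarrow> 'm \<Rightarrow> 'm) \<Rightarrow> ((complex ^ 'n) set \<Rightarrow> 'm \<Rightarrow> 'm)
     \<Rightarrow> ((complex ^ 'n) set \<Rightarrow> 'm \<Rightarrow> bool) \<Rightarrow> bool" where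
  "PQM_model M u proj R \<longleftrightarrow>
     (\<forall>U. unitary U \<longrightarrow> (\<forall>x\<in>M. u U x \<in> M)) \<and>
     (\<forall>q. csubspace q \<longrightarrow> (\<forall>x\<in>M. proj q x \<in> M)) \<and>
     (\<exists>x\<in>M. \<not> R bot_sub x) \<and>
     (\<forall>x\<in>M. R UNIV x) \<and>
     (\<forall>p q. csubspace p \<longrightarrow> csubspace q \<longrightarrow> p \<subseteq> q \<longrightarrow> (\<forall>x\<in>M. R p x \<longrightarrow> R q x)) \<and>
     (\<forall>p q. csubspace p \<longrightarrow> csubspace q \<longrightarrow> compatible p q \<longrightarrow>
        (\<forall>x\<in>M. R p x \<and> R q x \<longrightarrow> R (p \<inter> q) x)) \<and>
     (\<forall>p q. csubspace p \<longrightarrow> csubspace q \<longrightarrow> (\<forall>x\<in>M. R p x \<longrightarrow> R (sasaki p q) (proj q x))) \<and>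
     (\<forall>p q. csubspace p \<longrightarrow> csubspace q \<longrightarrow> p \<subseteq> q \<longrightarrow>
        (\<forall>x\<in>M. R bot_sub (proj p (proj q x)) \<longrightarrow> R bot_sub (proj p x))) \<and>
     (\<forall>q. csubspace q \<longrightarrow> (\<forall>x\<in>M. R bot_sub (proj q x) \<longrightarrow> R (orth q) x)) \<and>
     (\<forall>p U. csubspace p \<longrightarrow> unitary U \<longrightarrow> (\<forall>x\<in>M. R p x \<longrightarrow> R (uimage U p) (u U x))) \<and>
     (\<forall>p U. csubspace p \<longrightarrow> unitary U \<longrightarrow> (\<forall>x\<in>M. R p (u U x) \<longrightarrow> R (upreimage U p) x))"

end

theory Submission
  imports Defs
begin

(* Let W(m) be the set of vectors v with [m : v^\<bottom>]; then \<kappa>(m) = W(m)^\<bottom> works. Every p in the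
   filter of m has p^\<bottom> \<subseteq> W(m), and conversely, once W(m) is known to be a subspace, its
   orthocomplement is reached from the hyperplanes v^\<bottom> (v \<in> W(m)) by meeting compatible
   subspaces, one orthogonal direction at a time.

   The heart is closure of W(m) under addition. Projecting m onto the plane P spanned by v and w,
   the Sasaki projections of v^\<bottom> and w^\<bottom> put two distinct lines of P into the filter of
   \<pi>_P(m). In dimension at least 3 two distinct lines in one filter force \<bottom>, so (\<pi>_\<bottom>) gives
   [m : P^\<bottom>] and P^\<bottom> \<subseteq> (v + w)^\<bottom>.

   For the two-line lemma: if the lines of x and y are in a filter and the projections of x and y
   onto w^\<bottom> are orthogonal, then projecting onto w^\<bottom> shows that the line of w is in the filter
   too. Using a direction orthogonal to x and y, such lines w come in pairs that are orthogonal when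
   the angle between x and y is large (cot\<^sup>2 \<le> 1/8), and otherwise form a pair of lines
   with a smaller cot\<^sup>2 (by at least 1/12). Induction ends with two orthogonal lines, whose meet
   is \<bottom>. *)

section \<open>Complex inner product and subspaces\<close>

lemma cinner_add_left: "cinner (x + y) z = cinner x z + cinner y z"
  by (simp add: cinner_def sum.distrib[symmetric] distrib_right)

lemma cinner_add_right: "cinner z (x + y) = cinner z x + cinner z y"
  by (simp add: cinner_def sum.distrib[symmetric] distrib_left)

lemma cinner_diff_left: "cinner (x - y) z = cinner x z - cinner y z"
  by (simp add: cinner_def sum_subtractf[symmetric] left_diff_distrib)

lemma cinner_diff_right: "cinner z (x - y) = cinner z x - cinner z y"
  by (simp add: cinner_def sum_subtractf[symmetric] right_diff_distrib)

lemma cinner_scale_left: "cinner (c *s x) z = cnj c * cinner x z"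
  by (simp add: cinner_def sum_distrib_left mult.assoc)

lemma cinner_scale_right: "cinner z (c *s x) = c * cinner z x"
  by (simp add: cinner_def sum_distrib_left mult.left_commute)

lemma cinner_zero_left [simp]: "cinner 0 z = 0"
  and cinner_zero_right [simp]: "cinner z 0 = 0"
  by (simp_all add: cinner_def)

lemmas cinner_simps = cinner_add_left cinner_add_right cinner_diff_left cinner_diff_right
  cinner_scale_left cinner_scale_right

lemma cinner_cnj: "cnj (cinner x y) = cinner y x"
  by (simp add: cinner_def mult.commute)

lemma cinner_eq_0_commute: "cinner x y = 0 \<longleftrightarrow> cinner y x = 0"
  by (metis cinner_cnj complex_cnj_zero)

lemma cinner_self: "cinner x x = complex_of_real ((norm x)\<^sup>2)"
proof -
  have "cinner x x = (\<Sum>i\<in>UNIV. complex_of_real ((cmod (x $ i))\<^sup>2))"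
    unfolding cinner_def by (intro sum.cong refl) (metis complex_norm_square mult.commute)
  also have "\<dots> = complex_of_real ((norm x)\<^sup>2)"
    by (simp add: norm_vec_def L2_set_def sum_nonneg)
  finally show ?thesis .
qed

lemma cinner_self_eq_0 [simp]: "cinner x x = 0 \<longleftrightarrow> x = 0"
  by (simp add: cinner_self)

lemma cnj_mult_self: "cnj z * z = complex_of_real ((cmod z)\<^sup>2)"
  unfolding complex_norm_square by (rule mult.commute)

lemma inner_eq_Re_cinner: "inner x y = Re (cinner x y)"
  by (simp add: inner_vec_def cinner_def inner_complex_def)

lemma cinner_eq_0_iff_inner:
  "cinner x y = 0 \<longleftrightarrow> inner x y = 0 \<and> inner (\<i> *s x) y = 0"
proof -
  have "inner (\<i> *s x) y = Im (cinner x y)"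
    by (simp add: inner_eq_Re_cinner cinner_scale_left)
  then show ?thesis by (simp add: inner_eq_Re_cinner complex_eq_iff)
qed

lemma scaleR_eq_scale: "r *\<^sub>R (x :: complex ^ 'n) = complex_of_real r *s x"
  by (vector scaleR_conv_of_real)

lemma csubspace_subspace: "csubspace S \<Longrightarrow> subspace S"
  unfolding csubspace_def subspace_def by (simp add: scaleR_eq_scale)

lemma csubspace_diff: "csubspace S \<Longrightarrow> x \<in> S \<Longrightarrow> y \<in> S \<Longrightarrow> x - y \<in> S"
  using subspace_diff csubspace_subspace by blast

lemma csubspace_inter: "csubspace p \<Longrightarrow> csubspace q \<Longrightarrow> csubspace (p \<inter> q)"
  unfolding csubspace_def by auto

lemma csubspace_orth: "csubspace (orth S)"
  unfolding csubspace_def orth_def by (simp add: cinner_simps)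

lemma csubspace_ssum:
  assumes p: "csubspace p" and q: "csubspace q"
  shows "csubspace (ssum p q)"
  unfolding csubspace_def
proof (intro conjI ballI allI)
  show "0 \<in> ssum p q" using p q by (force simp: csubspace_def ssum_def)
next
  fix s t assume "s \<in> ssum p q" "t \<in> ssum p q"
  then obtain x y x' y' where "s = x + y" "t = x' + y'" "x \<in> p" "y \<in> q" "x' \<in> p" "y' \<in> q"
    by (auto simp: ssum_def)
  then have "s + t = (x + x') + (y + y')" "x + x' \<in> p" "y + y' \<in> q"
    using p q by (auto simp: csubspace_def algebra_simps)
  then show "s + t \<in> ssum p q" by (auto simp: ssum_def)
next
  fix c s assume "s \<in> ssum p q"
  then obtain x y where "s = x + y" "x \<in> p" "y \<in> q" by (auto simp: ssum_def)
  then have "c *s s = c *s x + c *s y" "c *s x \<in> p" "c *s y \<in> q"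
    using p q by (auto simp: csubspace_def vector_add_ldistrib)
  then show "c *s s \<in> ssum p q" by (auto simp: ssum_def)
qed

lemma csubspace_sasaki: "csubspace p \<Longrightarrow> csubspace q \<Longrightarrow> csubspace (sasaki p q)"
  unfolding sasaki_def by (intro csubspace_inter csubspace_ssum csubspace_orth)

lemma orth_antimono: "S \<subseteq> T \<Longrightarrow> orth T \<subseteq> orth S"
  unfolding orth_def by auto

lemma orth_orth_superset: "S \<subseteq> orth (orth S)"
  unfolding orth_def using cinner_eq_0_commute by blast

lemma orth_orth:
  assumes S: "csubspace S"
  shows "orth (orth S) = S"
proof
  show "orth (orth S) \<subseteq> S"
  proof
    fix x assume x: "x \<in> orth (orth S)"
    have span: "span S = S"
      using csubspace_subspace[OF S] by simp
    obtain y z where y: "y \<in> S" and z: "\<And>w. w \<in> S \<Longrightarrow> orthogonal z w" and "x = y + z"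
      using orthogonal_subspace_decomp_exists[of S x] span by metis
    have "z \<in> orth S"
      unfolding orth_def
    proof (intro CollectI ballI)
      fix w assume "w \<in> S"
      moreover have "\<i> *s w \<in> S" using S \<open>w \<in> S\<close> by (simp add: csubspace_def)
      ultimately have "orthogonal w z" "orthogonal (\<i> *s w) z"
        using z orthogonal_commute by blast+
      then show "cinner w z = 0" by (simp add: cinner_eq_0_iff_inner orthogonal_def)
    qed
    then have "inner z x = 0"
      using x by (simp add: orth_def inner_eq_Re_cinner)
    then have "z = 0"
      using z[OF y] \<open>x = y + z\<close> by (simp add: orthogonal_def inner_add_right inner_commute)
    then show "x \<in> S" using y \<open>x = y + z\<close> by simp
  qed
qed (rule orth_orth_superset)

lemma orth_inter_self: "csubspace p \<Longrightarrow> p \<inter> orth p = bot_sub"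
  unfolding orth_def bot_sub_def csubspace_def by auto

section \<open>Lines, planes and orthogonal projection\<close>

definition cline :: "complex ^ 'n \<Rightarrow> (complex ^ 'n) set" where
  "cline x = range (\<lambda>c. c *s x)"

definition cplane :: "complex ^ 'n \<Rightarrow> complex ^ 'n \<Rightarrow> (complex ^ 'n) set" where
  "cplane v w = {\<alpha> *s v + \<beta> *s w | \<alpha> \<beta>. True}"

definition perp :: "complex ^ 'n \<Rightarrow> complex ^ 'n \<Rightarrow> complex ^ 'n" where
  "perp w x = x - (cinner w x / cinner w w) *s w"

lemma mem_cline: "y \<in> cline x \<longleftrightarrow> (\<exists>c. y = c *s x)"
  by (auto simp: cline_def)

lemma cline_self: "x \<in> cline x"
  unfolding mem_cline by (metis vector_smult_lid)

lemma cline_subset: "y \<in> cline x \<Longrightarrow> cline y \<subseteq> cline x"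
  unfolding cline_def by auto

lemma cline_0: "cline 0 = bot_sub"
  by (auto simp: cline_def bot_sub_def)

lemma csubspace_cline: "csubspace (cline x)"
  unfolding csubspace_def
proof (intro conjI ballI allI)
  show "0 \<in> cline x" using mem_cline by force
next
  fix y z assume "y \<in> cline x" "z \<in> cline x"
  then obtain c d where "y = c *s x" "z = d *s x" by (auto simp: mem_cline)
  then have "y + z = (c + d) *s x" by (simp add: vector_sadd_rdistrib)
  then show "y + z \<in> cline x" unfolding mem_cline by blast
next
  fix c y assume "y \<in> cline x"
  then show "c *s y \<in> cline x" by (auto simp: mem_cline)
qed

lemma in_cplane: "\<alpha> *s v + \<beta> *s w \<in> cplane v w"
  unfolding cplane_def by blast

lemma cplane_commute: "cplane v w = cplane w v"
  unfolding cplane_def by (metis add.commute)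

lemma csubspace_cplane: "csubspace (cplane v w)"
  unfolding csubspace_def
proof (intro conjI ballI allI)
  show "0 \<in> cplane v w" using in_cplane[of 0 v 0 w] by simp
next
  fix x y assume "x \<in> cplane v w" "y \<in> cplane v w"
  then obtain a b c d where "x = a *s v + b *s w" "y = c *s v + d *s w"
    by (auto simp: cplane_def)
  then have "x + y = (a + c) *s v + (b + d) *s w" by (simp add: vec_eq_iff algebra_simps)
  then show "x + y \<in> cplane v w" by (metis in_cplane)
next
  fix c x assume "x \<in> cplane v w"
  then obtain a b where "x = a *s v + b *s w" by (auto simp: cplane_def)
  then have "c *s x = (c * a) *s v + (c * b) *s w" by (simp add: vec_eq_iff algebra_simps)
  then show "c *s x \<in> cplane v w" by (metis in_cplane)
qed

lemma orth_cline: "orth (cline x) = orth {x}"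
  unfolding orth_def cline_def by (auto simp: cinner_scale_left)

lemma orth_orth_single: "orth (orth {w}) = cline w"
  using orth_orth[OF csubspace_cline] by (simp add: orth_cline)

lemma orth_single_subset: "y \<in> cline x \<Longrightarrow> orth {x} \<subseteq> orth {y}"
  unfolding orth_def mem_cline by (auto simp: cinner_scale_left)

lemma cline_subset_orth:
  assumes "cinner x y = 0"
  shows "cline x \<subseteq> orth (cline y)"
proof -
  have "cinner y x = 0" using assms cinner_eq_0_commute by blast
  then show ?thesis
    unfolding orth_cline by (auto simp: orth_def mem_cline cinner_scale_right)
qed

lemma sgn_eq_scale: "sgn x = complex_of_real (inverse (norm x)) *s x"
  by (simp add: sgn_div_norm scaleR_eq_scale)

lemma scale_norm_sgn: "x = complex_of_real (norm x) *s sgn x"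
  by (cases "x = 0") (simp_all add: sgn_eq_scale vec_eq_iff)

lemma cinner_sgn_self: "x \<noteq> 0 \<Longrightarrow> cinner (sgn x) (sgn x) = 1"
  by (simp add: cinner_self norm_sgn)

lemma cinner_sgn_eq_0: "cinner x y = 0 \<Longrightarrow> cinner (sgn x) (sgn y) = 0"
  by (simp add: sgn_eq_scale cinner_scale_left cinner_scale_right)

lemma perp_decomp: "x = perp v x + (cinner v x / cinner v v) *s v"
  by (simp add: perp_def)

lemma cinner_perp [simp]: "cinner w (perp w x) = 0"
proof (cases "w = 0")
  case False
  then show ?thesis by (simp add: perp_def cinner_diff_right cinner_scale_right)
qed simp

lemma perp_eq_0_iff: "perp w x = 0 \<longleftrightarrow> x \<in> cline w"
proof
  assume "perp w x = 0"
  then show "x \<in> cline w" by (auto simp: perp_def mem_cline)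
next
  assume "x \<in> cline w"
  then obtain c where "x = c *s w" by (auto simp: mem_cline)
  then show "perp w x = 0"
    by (cases "w = 0") (simp_all add: perp_def cinner_scale_right)
qed

lemma perp_mem: "csubspace p \<Longrightarrow> x \<in> p \<Longrightarrow> w \<in> p \<Longrightarrow> perp w x \<in> p"
  unfolding perp_def by (intro csubspace_diff) (auto simp: csubspace_def)

lemma cinner_perp_perp:
  assumes "w \<noteq> 0"
  shows "cinner (perp w x) (perp w y) = (cinner x y * cinner w w - cinner x w * cinner w y) / cinner w w"
proof -
  have "cnj (cinner w w) = cinner w w"
    by (simp add: cinner_self)
  then show ?thesis
    using assms by (simp add: perp_def cinner_simps cinner_cnj field_simps)
qed

lemma cinner_perp_self: "cinner (perp w x) (perp w x) = cinner x (perp w x)"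
proof -
  have "cinner (perp w x) p = cinner x p" if "cinner w p = 0" for p
    using that by (simp add: perp_def cinner_diff_left cinner_scale_left)
  then show ?thesis by simp
qed

lemma norm_perp:
  assumes "w \<noteq> 0"
  shows "(norm w)\<^sup>2 * (norm (perp w x))\<^sup>2 = (norm w)\<^sup>2 * (norm x)\<^sup>2 - (cmod (cinner w x))\<^sup>2"
proof -
  have "cinner w w * cinner (perp w x) (perp w x) = cinner x x * cinner w w - cinner x w * cinner w x"
    using assms by (simp add: cinner_perp_perp)
  also have "cinner x w * cinner w x = complex_of_real ((cmod (cinner w x))\<^sup>2)"
    using cnj_mult_self[of "cinner w x"] by (simp add: cinner_cnj)
  finally show ?thesis
    by (simp add: cinner_self mult.commute flip: of_real_mult of_real_diff of_real_power)
qed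

lemma sasaki_cline_orth_single:
  assumes "w \<noteq> 0"
  shows "sasaki (cline x) (orth {w}) \<subseteq> cline (perp w x)"
proof
  fix y assume "y \<in> sasaki (cline x) (orth {w})"
  then obtain d c where y: "y = d *s w + c *s x" and "cinner w y = 0"
    unfolding sasaki_def ssum_def orth_orth_single by (auto simp: orth_def cline_def)
  then have "d = - c * cinner w x / cinner w w"
    using assms by (simp add: cinner_simps field_simps eq_neg_iff_add_eq_0)
  then have "y = c *s perp w x"
    using y by (simp add: perp_def vec_eq_iff algebra_simps)
  then show "y \<in> cline (perp w x)" by (auto simp: mem_cline)
qed

lemma sasaki_orth_single_subset:
  assumes "v \<in> q"
  shows "sasaki (orth {v}) q \<subseteq> q \<inter> orth {v}"
proof
  fix y assume "y \<in> sasaki (orth {v}) q"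
  then obtain t s where "y \<in> q" "y = t + s" "t \<in> orth q" "s \<in> orth {v}"
    unfolding sasaki_def ssum_def by auto
  then show "y \<in> q \<inter> orth {v}"
    using assms by (auto simp: orth_def cinner_add_right)
qed

lemma cplane_inter_orth_single:
  assumes "v \<noteq> 0"
  shows "cplane v w \<inter> orth {v} \<subseteq> cline (perp v w)"
proof
  fix y assume "y \<in> cplane v w \<inter> orth {v}"
  then obtain \<alpha> \<beta> where y: "y = \<alpha> *s v + \<beta> *s w" and "cinner v y = 0"
    unfolding cplane_def orth_def by (auto simp: cinner_eq_0_commute)
  then have "\<alpha> = - \<beta> * cinner v w / cinner v v"
    using assms by (simp add: cinner_simps field_simps eq_neg_iff_add_eq_0)
  then have "y = \<beta> *s perp v w"
    using y by (simp add: perp_def vec_eq_iff algebra_simps)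
  then show "y \<in> cline (perp v w)" by (auto simp: mem_cline)
qed

lemma compatible_if_subset_orth:
  assumes "csubspace p" "csubspace q" "p \<subseteq> orth q"
  shows "compatible p q"
proof -
  have "p \<inter> q = {0}"
    using assms orth_inter_self[of q] by (auto simp: csubspace_def bot_sub_def)
  moreover have "p \<inter> orth q = p" using assms(3) by blast
  ultimately show ?thesis unfolding compatible_def ssum_def by force
qed

lemma compatible_orth_single:
  assumes p: "csubspace p" and v: "v \<in> p"
  shows "compatible p (orth {v})"
  unfolding compatible_def orth_orth_single
proof
  show "p \<subseteq> ssum (p \<inter> orth {v}) (p \<inter> cline v)"
  proof
    fix x assume "x \<in> p"
    then have "perp v x \<in> p \<inter> orth {v}" "(cinner v x / cinner v v) *s v \<in> p \<inter> cline v"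
      using p v perp_mem by (auto simp: orth_def csubspace_def mem_cline)
    then show "x \<in> ssum (p \<inter> orth {v}) (p \<inter> cline v)"
      unfolding ssum_def using perp_decomp by blast
  qed
qed (use p in \<open>auto simp: ssum_def csubspace_def\<close>)

lemma orth_inter_orth_single:
  assumes S: "csubspace S" and v: "v \<in> S"
  shows "orth (S \<inter> orth {v}) \<inter> orth {v} \<subseteq> orth S"
proof
  fix y assume y: "y \<in> orth (S \<inter> orth {v}) \<inter> orth {v}"
  have "cinner x y = 0" if "x \<in> S" for x
  proof -
    have "perp v x \<in> S \<inter> orth {v}"
      using perp_mem[OF S that v] by (simp add: orth_def)
    then have "cinner (perp v x) y = 0" and "cinner v y = 0"
      using y by (auto simp: orth_def)
    then show ?thesis
      by (subst perp_decomp[of x v]) (simp add: cinner_simps)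
  qed
  then show "y \<in> orth S" by (simp add: orth_def)
qed

lemma exists_orth_pair:
  fixes a b :: "complex ^ 'n"
  assumes "CARD('n) \<ge> 3"
  obtains g where "g \<noteq> 0" "cinner a g = 0" "cinner b g = 0"
proof -
  let ?S = "{a, \<i> *s a, b, \<i> *s b}"
  have "dim ?S \<le> card ?S" using dim_le_card[of ?S ?S] by (simp add: span_superset)
  also have "card ?S \<le> 4" by (simp add: card_insert_if)
  also have "4 < DIM(complex ^ 'n)" using assms by simp
  finally obtain g where "g \<noteq> 0" and g: "\<And>y. y \<in> span ?S \<Longrightarrow> orthogonal g y"
    using orthogonal_to_subspace_exists by blast
  then have "inner y g = 0" if "y \<in> ?S" for y
    using g[OF span_base[OF that]] by (simp add: orthogonal_def inner_commute)
  then have "cinner a g = 0" "cinner b g = 0"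
    by (simp_all add: cinner_eq_0_iff_inner)
  with \<open>g \<noteq> 0\<close> that show ?thesis by blast
qed

locale orthonormal_triple =
  fixes e f h :: "complex ^ 'n"
  assumes ee: "cinner e e = 1" and ff: "cinner f f = 1" and hh: "cinner h h = 1"
    and ef: "cinner e f = 0" and eh: "cinner e h = 0" and fh: "cinner f h = 0"
begin

lemma fe: "cinner f e = 0" and he: "cinner h e = 0" and hf: "cinner h f = 0"
  using ef eh fh cinner_eq_0_commute by blast+

lemmas cinner_basis = ee ff hh ef eh fh fe he hf

lemma cinner_tilted:
  "cinner (\<alpha> *s e + f + \<sigma> *s h) (\<beta> *s e + f + \<tau> *s h) = cnj \<alpha> * \<beta> + 1 + cnj \<sigma> * \<tau>"
  "cinner e (\<alpha> *s e + f + \<sigma> *s h) = \<alpha>"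
  "cinner f (\<alpha> *s e + f + \<sigma> *s h) = 1"
  "cinner h (\<alpha> *s e + f + \<sigma> *s h) = \<sigma>"
  "cinner (\<alpha> *s e + f + \<sigma> *s h) (\<beta> *s e + f) = cnj \<alpha> * \<beta> + 1"
  "cinner e (\<beta> *s e + f) = \<beta>"
  by (simp_all add: cinner_simps cinner_basis)

end

definition cot2 :: "complex ^ 'n \<Rightarrow> complex ^ 'n \<Rightarrow> real" where
  "cot2 a b = (cmod (cinner a b))\<^sup>2 / ((norm a)\<^sup>2 * (norm b)\<^sup>2 - (cmod (cinner a b))\<^sup>2)"

lemma orthonormal_frame:
  assumes a: "a \<noteq> 0" and b: "b \<notin> cline a"
    and g: "g \<noteq> 0" "cinner a g = 0" "cinner b g = 0"
  obtains e f h \<mu> where "orthonormal_triple e f h" "a \<in> cline e" "b \<in> cline (\<mu> *s e + f)"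
    "(cmod \<mu>)\<^sup>2 = cot2 a b"
proof
  define r where "r = perp a b"
  have r: "r \<noteq> 0" using b by (simp add: r_def perp_eq_0_iff)
  define \<mu> where "\<mu> = cinner a b / complex_of_real (norm a * norm r)"
  have "cinner a r = 0" "cinner r g = 0"
    by (simp_all add: r_def perp_def cinner_simps g)
  then show "orthonormal_triple (sgn a) (sgn r) (sgn g)"
    unfolding orthonormal_triple_def using a r g by (simp add: cinner_sgn_self cinner_sgn_eq_0)
  show "a \<in> cline (sgn a)" using scale_norm_sgn mem_cline by blast
  have scale_sgn: "c *s x = (c * complex_of_real (norm x)) *s sgn x" for c and x :: "complex ^ 'n"
    using scale_norm_sgn[of x] by (metis vector_smult_assoc)
  have "cinner a b / cinner a a * complex_of_real (norm a) = complex_of_real (norm r) * \<mu>"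
    using a r by (simp add: \<mu>_def cinner_self field_simps power2_eq_square)
  then have "b = complex_of_real (norm r) *s (\<mu> *s sgn a + sgn r)"
    using perp_decomp[of b a] scale_sgn[of _ a] scale_sgn[of 1 r]
    by (simp add: r_def[symmetric] add.commute)
  then show "b \<in> cline (\<mu> *s sgn a + sgn r)" unfolding mem_cline by blast
  have "(cmod \<mu>)\<^sup>2 = (cmod (cinner a b))\<^sup>2 / ((norm a)\<^sup>2 * (norm r)\<^sup>2)"
    by (simp add: \<mu>_def norm_divide norm_mult power_divide power_mult_distrib)
  then show "(cmod \<mu>)\<^sup>2 = cot2 a b"
    unfolding cot2_def norm_perp[OF a, of b, symmetric] r_def .
qed

section \<open>Two lines in one filter force \<open>\<bottom>\<close>\<close>

locale pqm =
  fixes M :: "'m set"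
    and proj :: "(complex ^ 'n) set \<Rightarrow> 'm \<Rightarrow> 'm"
    and R :: "(complex ^ 'n) set \<Rightarrow> 'm \<Rightarrow> bool"
  assumes proj_closed: "csubspace q \<Longrightarrow> x \<in> M \<Longrightarrow> proj q x \<in> M"
    and R_UNIV: "x \<in> M \<Longrightarrow> R UNIV x"
    and R_mono: "csubspace p \<Longrightarrow> csubspace q \<Longrightarrow> p \<subseteq> q \<Longrightarrow> x \<in> M \<Longrightarrow> R p x \<Longrightarrow> R q x"
    and R_inter: "csubspace p \<Longrightarrow> csubspace q \<Longrightarrow> compatible p q \<Longrightarrow> x \<in> M \<Longrightarrow>
      R p x \<Longrightarrow> R q x \<Longrightarrow> R (p \<inter> q) x"
    and R_sasaki: "csubspace p \<Longrightarrow> csubspace q \<Longrightarrow> x \<in> M \<Longrightarrow> R p x \<Longrightarrow> R (sasaki p q) (proj q x)"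
    and R_orth_if_proj_bot: "csubspace q \<Longrightarrow> x \<in> M \<Longrightarrow> R bot_sub (proj q x) \<Longrightarrow> R (orth q) x"

lemma pqm_if_PQM_model:
  assumes "PQM_model M u proj R"
  shows "pqm M proj R"
proof
  note ax = assms[unfolded PQM_model_def]
  show "proj q x \<in> M" if "csubspace q" "x \<in> M" for q x
    using ax that by simp
  show "R UNIV x" if "x \<in> M" for x
    using ax that by simp
  show "R q x" if "csubspace p" "csubspace q" "p \<subseteq> q" "x \<in> M" "R p x" for p q x
    using ax that by simp
  show "R (p \<inter> q) x" if "csubspace p" "csubspace q" "compatible p q" "x \<in> M" "R p x" "R q x" for p q x
    using ax that by simp
  show "R (sasaki p q) (proj q x)" if "csubspace p" "csubspace q" "x \<in> M" "R p x" for p q x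
    using ax that by simp
  show "R (orth q) x" if "csubspace q" "x \<in> M" "R bot_sub (proj q x)" for q x
    using ax that by simp
qed

context pqm
begin

lemma R_bot_if_subset_orth:
  assumes "csubspace p" "csubspace q" "p \<subseteq> orth q" "x \<in> M" "R p x" "R q x"
  shows "R bot_sub x"
proof -
  have "R (p \<inter> q) x"
    using assms by (intro R_inter compatible_if_subset_orth)
  moreover have "p \<inter> q = bot_sub"
    using assms orth_inter_self[of q] by (auto simp: csubspace_def bot_sub_def)
  ultimately show ?thesis by simp
qed

lemma R_bot_if_orth_lines:
  "x \<in> M \<Longrightarrow> R (cline a) x \<Longrightarrow> R (cline b) x \<Longrightarrow> cinner a b = 0 \<Longrightarrow> R bot_sub x"
  by (rule R_bot_if_subset_orth[OF csubspace_cline csubspace_cline cline_subset_orth])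

lemma R_cline_if_perps_orth:
  assumes z: "z \<in> M" and w: "w \<noteq> 0" and "R (cline x) z" "R (cline y) z"
    and "cinner (perp w x) (perp w y) = 0"
  shows "R (cline w) z"
proof -
  let ?q = "orth {w}"
  have z': "proj ?q z \<in> M" by (rule proj_closed[OF csubspace_orth z])
  have "R (cline (perp w v)) (proj ?q z)" if "R (cline v) z" for v
    using R_sasaki[OF csubspace_cline csubspace_orth z that]
    by (rule R_mono[OF csubspace_sasaki[OF csubspace_cline csubspace_orth] csubspace_cline
          sasaki_cline_orth_single[OF w] z'])
  then have "R bot_sub (proj ?q z)"
    using assms R_bot_if_orth_lines[OF z'] by blast
  then have "R (orth ?q) z"
    by (rule R_orth_if_proj_bot[OF csubspace_orth z])
  then show ?thesis by (simp add: orth_orth_single)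
qed

lemma R_cline_tilted:
  fixes H \<sigma> :: real
  assumes z: "z \<in> M" and onb: "orthonormal_triple e f h"
    and Re: "R (cline e) z" and Rb: "R (cline (\<mu> *s e + f)) z" and \<sigma>: "\<sigma>\<^sup>2 = H - 1"
  shows "R (cline ((\<mu> * complex_of_real H) *s e + f + complex_of_real \<sigma> *s h)) z"
proof -
  interpret orthonormal_triple e f h by (rule onb)
  define w where "w = (\<mu> * complex_of_real H) *s e + f + complex_of_real \<sigma> *s h"
  have "w \<noteq> 0"
    using cinner_tilted(3) by (metis cinner_zero_right w_def zero_neq_one)
  have "(complex_of_real \<sigma>)\<^sup>2 = complex_of_real H - 1"
    using arg_cong[OF \<sigma>, of complex_of_real] by simp
  then have "cinner e (\<mu> *s e + f) * cinner w w = cinner e w * cinner w (\<mu> *s e + f)"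
    unfolding w_def cinner_tilted complex_cnj_mult complex_cnj_complex_of_real by algebra
  then have "cinner (perp w e) (perp w (\<mu> *s e + f)) = 0"
    using \<open>w \<noteq> 0\<close> by (simp add: cinner_perp_perp)
  then show ?thesis
    unfolding w_def[symmetric] using R_cline_if_perps_orth[OF z \<open>w \<noteq> 0\<close> Re Rb] by blast
qed

lemma R_bot_if_small_tilt:
  assumes z: "z \<in> M" and onb: "orthonormal_triple e f h"
    and Re: "R (cline e) z" and Rb: "R (cline (\<mu> *s e + f)) z" and small: "(cmod \<mu>)\<^sup>2 \<le> 1/8"
  shows "R bot_sub z"
proof (cases "\<mu> = 0")
  case True
  then show ?thesis
    using R_bot_if_orth_lines[OF z Re] Rb orthonormal_triple.ef[OF onb] by simp
next
  case False
  define m where "m = (cmod \<mu>)\<^sup>2"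
  have m: "0 < m" "m \<le> 1/8" using False small by (simp_all add: m_def)
  define s where "s = sqrt (1 - 8 * m)"
  have s: "0 \<le> s" "s\<^sup>2 = 1 - 8 * m" using m by (simp_all add: s_def)
  \<comment> \<open>a root of \<open>m H\<^sup>2 - H + 2 = 0\<close>, real as \<open>m \<le> 1/8\<close>: it makes the two tilted lines orthogonal\<close>
  define H where "H = (1 + s) / (2 * m)"
  have H: "m * H\<^sup>2 - H + 2 = 0"
    using m s by (simp add: H_def field_simps power2_eq_square) algebra
  have "1 \<le> H"
    using m s by (simp add: H_def field_simps)
  define \<sigma> where "\<sigma> = sqrt (H - 1)"
  have \<sigma>: "\<sigma>\<^sup>2 = H - 1" "(- \<sigma>)\<^sup>2 = H - 1" using \<open>1 \<le> H\<close> by (simp_all add: \<sigma>_def)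
  let ?w = "\<lambda>t. (\<mu> * complex_of_real H) *s e + f + complex_of_real t *s h"
  have "R (cline (?w \<sigma>)) z" "R (cline (?w (- \<sigma>))) z"
    using R_cline_tilted[OF z onb Re Rb] \<sigma> by blast+
  moreover have "cinner (?w \<sigma>) (?w (- \<sigma>)) = 0"
  proof -
    have "cinner (?w \<sigma>) (?w (- \<sigma>)) = cnj \<mu> * \<mu> * (complex_of_real H)\<^sup>2 + 1 - (complex_of_real \<sigma>)\<^sup>2"
      unfolding orthonormal_triple.cinner_tilted(1)[OF onb] by (simp add: power2_eq_square algebra_simps)
    also have "\<dots> = complex_of_real (m * H\<^sup>2 - H + 2)"
      using \<sigma>(1) by (simp add: m_def cnj_mult_self flip: of_real_power)
    finally show ?thesis by (simp add: H)
  qed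
  ultimately show ?thesis by (rule R_bot_if_orth_lines[OF z])
qed

lemma R_two_lines_descent:
  assumes z: "z \<in> M" and onb: "orthonormal_triple e f h"
    and Re: "R (cline e) z" and Rb: "R (cline (\<mu> *s e + f)) z" and large: "1/8 < (cmod \<mu>)\<^sup>2"
  obtains a b g where "R (cline a) z" "R (cline b) z" "a \<noteq> 0" "b \<notin> cline a"
    "g \<noteq> 0" "cinner a g = 0" "cinner b g = 0" "cot2 a b \<le> (cmod \<mu>)\<^sup>2 - 1/12"
proof
  interpret orthonormal_triple e f h by (rule onb)
  define m where "m = (cmod \<mu>)\<^sup>2"
  define a where "a = (\<mu> * 2) *s e + f + 1 *s h"
  define b where "b = (\<mu> * 2) *s e + f + (- 1) *s h"
  define g where "g = e - (2 * cnj \<mu>) *s f"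
  show "R (cline a) z" "R (cline b) z"
    using R_cline_tilted[OF z onb Re Rb, of 1 2] R_cline_tilted[OF z onb Re Rb, of "- 1" 2]
    by (simp_all add: a_def b_def)
  show "a \<noteq> 0"
    using cinner_tilted(3)[of "\<mu> * 2" 1] by (metis a_def cinner_zero_right zero_neq_one)
  show "b \<notin> cline a"
  proof
    assume "b \<in> cline a"
    then obtain c where "b = c *s a" by (auto simp: mem_cline)
    then have "cinner f b = c * cinner f a" "cinner h b = c * cinner h a"
      by (simp_all add: cinner_scale_right)
    then show False unfolding a_def b_def cinner_tilted by simp
  qed
  show "g \<noteq> 0" "cinner a g = 0" "cinner b g = 0"
    using cinner_basis by (auto simp: a_def b_def g_def cinner_simps)
  have "0 \<le> m" "1/8 < m" using large by (simp_all add: m_def)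
  have "cnj \<mu> * \<mu> = complex_of_real m" by (simp add: m_def cnj_mult_self)
  then have ab: "cinner a b = complex_of_real (4 * m)"
    and "cinner a a = complex_of_real (4 * m + 2)" "cinner b b = complex_of_real (4 * m + 2)"
    unfolding a_def b_def cinner_tilted by (simp_all add: algebra_simps)
  then have "(norm a)\<^sup>2 = 4 * m + 2" "(norm b)\<^sup>2 = 4 * m + 2"
    by (simp_all only: cinner_self of_real_eq_iff)
  then have "cot2 a b = (4 * m)\<^sup>2 / ((4 * m + 2) * (4 * m + 2) - (4 * m)\<^sup>2)"
    unfolding cot2_def ab using \<open>0 \<le> m\<close> by simp
  also have "\<dots> = 16 * m\<^sup>2 / (16 * m + 4)"
    by (simp add: power2_eq_square algebra_simps)
  also have "\<dots> \<le> m - 1/12"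
    using \<open>1/8 < m\<close> by (simp add: field_simps power2_eq_square)
  finally show "cot2 a b \<le> (cmod \<mu>)\<^sup>2 - 1/12" by (simp add: m_def)
qed

lemma R_bot_if_cot2_le:
  assumes z: "z \<in> M"
  shows "cot2 a b \<le> real k / 12 \<Longrightarrow> a \<noteq> 0 \<Longrightarrow> b \<notin> cline a \<Longrightarrow> g \<noteq> 0 \<Longrightarrow>
    cinner a g = 0 \<Longrightarrow> cinner b g = 0 \<Longrightarrow> R (cline a) z \<Longrightarrow> R (cline b) z \<Longrightarrow> R bot_sub z"
proof (induction k arbitrary: a b g rule: less_induct)
  case (less k)
  obtain e f h \<mu> where onb: "orthonormal_triple e f h" and "a \<in> cline e" "b \<in> cline (\<mu> *s e + f)"
    and \<mu>: "(cmod \<mu>)\<^sup>2 = cot2 a b"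
    using orthonormal_frame[OF less.prems(2-6)] by blast
  have Re: "R (cline e) z" and Rb: "R (cline (\<mu> *s e + f)) z"
    using R_mono[OF csubspace_cline csubspace_cline cline_subset z] less.prems(7,8)
      \<open>a \<in> cline e\<close> \<open>b \<in> cline (\<mu> *s e + f)\<close> by blast+
  show ?case
  proof (cases "(cmod \<mu>)\<^sup>2 \<le> 1/8")
    case True
    then show ?thesis by (rule R_bot_if_small_tilt[OF z onb Re Rb])
  next
    case False
    then obtain a' b' g' where "R (cline a') z" "R (cline b') z" "a' \<noteq> 0" "b' \<notin> cline a'"
      "g' \<noteq> 0" "cinner a' g' = 0" "cinner b' g' = 0" and descent: "cot2 a' b' \<le> (cmod \<mu>)\<^sup>2 - 1/12"
      using R_two_lines_descent[OF z onb Re Rb] by (metis not_le)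
    moreover obtain k' where "k = Suc k'"
      using False \<mu> less.prems(1) by (cases k) auto
    moreover have "cot2 a' b' \<le> real k' / 12"
      using descent \<mu> less.prems(1) \<open>k = Suc k'\<close> by simp
    ultimately show ?thesis using less.IH[of k'] by blast
  qed
qed

lemma R_bot_if_two_lines:
  assumes d: "CARD('n) \<ge> 3" and z: "z \<in> M" and b: "b \<notin> cline a"
    and Ra: "R (cline a) z" and Rb: "R (cline b) z"
  shows "R bot_sub z"
proof (cases "a = 0")
  case True
  then show ?thesis using Ra by (simp add: cline_0)
next
  case False
  obtain g where "g \<noteq> 0" "cinner a g = 0" "cinner b g = 0"
    using exists_orth_pair[OF d] by blast
  moreover have "cot2 a b \<le> real (nat \<lceil>12 * cot2 a b\<rceil>) / 12"
    using real_nat_ceiling_ge[of "12 * cot2 a b"] by simp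
  ultimately show ?thesis
    using R_bot_if_cot2_le[OF z] False b Ra Rb by blast
qed

section \<open>The least element of a filter\<close>

lemma R_orth_single_add:
  assumes d: "CARD('n) \<ge> 3" and m: "m \<in> M" and Rv: "R (orth {v}) m" and Rw: "R (orth {w}) m"
  shows "R (orth {v + w}) m"
proof -
  have R_orth_cline: "R (orth {y}) m" if "y \<in> cline x" "R (orth {x}) m" for x y
    using R_mono[OF csubspace_orth csubspace_orth orth_single_subset m] that by blast
  consider "w \<in> cline v" | "v \<in> cline w" | "v \<notin> cline w" "w \<notin> cline v" by blast
  then show ?thesis
  proof cases
    case 1
    then have "v + w \<in> cline v"
      using csubspace_cline[of v] cline_self[of v] by (simp add: csubspace_def)
    then show ?thesis using R_orth_cline Rv by blast
  next
    case 2
    then have "v + w \<in> cline w"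
      using csubspace_cline[of w] cline_self[of w] by (simp add: csubspace_def)
    then show ?thesis using R_orth_cline Rw by blast
  next
    case 3
    let ?P = "cplane v w"
    have z: "proj ?P m \<in> M" by (rule proj_closed[OF csubspace_cplane m])
    have line: "R (cline (perp x y)) (proj ?P m)"
      if "?P = cplane x y" "x \<notin> cline y" "R (orth {x}) m" for x y
    proof -
      have "x \<noteq> 0" using that(2) csubspace_cline[of y] by (auto simp: csubspace_def)
      have "x \<in> ?P" using in_cplane[of 1 x 0 y] that(1) by simp
      then have "sasaki (orth {x}) ?P \<subseteq> cline (perp x y)"
        using sasaki_orth_single_subset cplane_inter_orth_single[OF \<open>x \<noteq> 0\<close>] that(1) by blast
      then show ?thesis
        using R_sasaki[OF csubspace_orth csubspace_cplane m that(3)]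
          R_mono[OF csubspace_sasaki[OF csubspace_orth csubspace_cplane] csubspace_cline _ z] by blast
    qed
    have "R (cline (perp v w)) (proj ?P m)" "R (cline (perp w v)) (proj ?P m)"
      using line[OF refl] line[OF cplane_commute] 3 Rv Rw by simp_all
    moreover have "perp w v \<notin> cline (perp v w)"
    proof
      assume "perp w v \<in> cline (perp v w)"
      then have "cinner v (perp w v) = 0" by (auto simp: mem_cline cinner_scale_right)
      then have "perp w v = 0" using cinner_perp_self[of w v] by simp
      then show False using 3 perp_eq_0_iff by blast
    qed
    ultimately have "R bot_sub (proj ?P m)"
      using R_bot_if_two_lines[OF d z] by blast
    then have "R (orth ?P) m" by (rule R_orth_if_proj_bot[OF csubspace_cplane m])
    moreover have "orth ?P \<subseteq> orth {v + w}"
      using in_cplane[of 1 v 1 w] by (intro orth_antimono) simp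
    ultimately show ?thesis using R_mono[OF csubspace_orth csubspace_orth _ m] by blast
  qed
qed

definition orth_vectors :: "'m \<Rightarrow> (complex ^ 'n) set" where
  "orth_vectors m = {v. R (orth {v}) m}"

lemma csubspace_orth_vectors:
  assumes d: "CARD('n) \<ge> 3" and m: "m \<in> M"
  shows "csubspace (orth_vectors m)"
  unfolding csubspace_def orth_vectors_def
proof (intro conjI ballI allI)
  have "orth {0 :: complex ^ 'n} = UNIV" by (simp add: orth_def)
  then show "0 \<in> {v. R (orth {v}) m}" using R_UNIV[OF m] by simp
next
  fix x y assume "x \<in> {v. R (orth {v}) m}" "y \<in> {v. R (orth {v}) m}"
  then show "x + y \<in> {v. R (orth {v}) m}" using R_orth_single_add[OF d m] by blast
next
  fix c x assume "x \<in> {v. R (orth {v}) m}"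
  moreover have "c *s x \<in> cline x" by (auto simp: mem_cline)
  ultimately show "c *s x \<in> {v. R (orth {v}) m}"
    using R_mono[OF csubspace_orth csubspace_orth orth_single_subset m] by blast
qed

lemma R_orth_if_subset_orth_vectors:
  assumes m: "m \<in> M"
  shows "csubspace S \<Longrightarrow> S \<subseteq> orth_vectors m \<Longrightarrow> R (orth S) m"
proof (induction "dim S" arbitrary: S rule: less_induct)
  case less
  show ?case
  proof (cases "S \<subseteq> {0}")
    case True
    then have "orth S = UNIV" by (auto simp: orth_def)
    then show ?thesis using R_UNIV[OF m] by simp
  next
    case False
    then obtain v where v: "v \<in> S" "v \<noteq> 0" by auto
    define S' where "S' = S \<inter> orth {v}"
    have S': "csubspace S'"
      unfolding S'_def by (rule csubspace_inter[OF less.prems(1) csubspace_orth])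
    have "v \<notin> S'" using v(2) by (simp add: S'_def orth_def)
    then have "S' \<subset> S" using v(1) by (auto simp: S'_def)
    then have "dim S' < dim S"
      using dim_psubset csubspace_subspace[OF S'] csubspace_subspace[OF less.prems(1)]
      by (metis span_eq_iff)
    then have "R (orth S') m"
      using less.hyps[OF _ S'] less.prems(2) by (auto simp: S'_def)
    moreover have "R (orth {v}) m" using v less.prems(2) by (auto simp: orth_vectors_def)
    moreover have "v \<in> orth S'"
      unfolding S'_def orth_def using cinner_eq_0_commute by blast
    then have "compatible (orth S') (orth {v})" by (rule compatible_orth_single[OF csubspace_orth])
    ultimately have "R (orth S' \<inter> orth {v}) m"
      using R_inter[OF csubspace_orth csubspace_orth _ m] by blast
    then show ?thesis
      using R_mono[OF csubspace_inter[OF csubspace_orth csubspace_orth] csubspace_orth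
          orth_inter_orth_single[OF less.prems(1) v(1)] m]
      unfolding S'_def by blast
  qed
qed

lemma R_iff_orth_orth_vectors_subset:
  assumes d: "CARD('n) \<ge> 3" and m: "m \<in> M" and p: "csubspace p"
  shows "R p m \<longleftrightarrow> orth (orth_vectors m) \<subseteq> p"
proof
  assume "R p m"
  have "orth p \<subseteq> orth_vectors m"
  proof
    fix v assume "v \<in> orth p"
    then have "p \<subseteq> orth {v}"
      unfolding orth_def using cinner_eq_0_commute by blast
    then show "v \<in> orth_vectors m"
      using R_mono[OF p csubspace_orth _ m \<open>R p m\<close>] by (simp add: orth_vectors_def)
  qed
  then show "orth (orth_vectors m) \<subseteq> p"
    using orth_antimono orth_orth[OF p] by metis
next
  assume "orth (orth_vectors m) \<subseteq> p"
  moreover have "R (orth (orth_vectors m)) m"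
    by (rule R_orth_if_subset_orth_vectors[OF m csubspace_orth_vectors[OF d m] subset_refl])
  ultimately show "R p m" using R_mono[OF csubspace_orth p _ m] by blast
qed

end

theorem mainTheorem10:
  fixes M :: "'m set"
    and u :: "complex ^ 'n ^ 'n \<Rightarrow> 'm \<Rightarrow> 'm"
    and proj :: "(complex ^ 'n) set \<Rightarrow> 'm \<Rightarrow> 'm"
    and R :: "(complex ^ 'n) set \<Rightarrow> 'm \<Rightarrow> bool"
  assumes "CARD('n) \<ge> 3"
    and "PQM_model M u proj R"
  shows "\<exists>\<kappa> :: 'm \<Rightarrow> (complex ^ 'n) set.
           \<forall>m\<in>M. csubspace (\<kappa> m) \<and>
             (\<forall>p. csubspace p \<longrightarrow> (R p m \<longleftrightarrow> \<kappa> m \<subseteq> p))"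
proof -
  interpret pqm M proj R by (rule pqm_if_PQM_model[OF assms(2)])
  show ?thesis
  proof (rule exI[of _ "\<lambda>m. orth (orth_vectors m)"], intro ballI conjI allI impI)
    fix m and p :: "(complex ^ 'n) set"
    assume "m \<in> M" "csubspace p"
    then show "R p m \<longleftrightarrow> orth (orth_vectors m) \<subseteq> p"
      by (rule R_iff_orth_orth_vectors_subset[OF assms(1)])
  qed (rule csubspace_orth)
qed

end
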